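(* Let $(X,\tau)$ be an extended locally convex space with finest locally convex topology $\tau_F$, let $Y$ be a closed linear subspace of $(X,\tau)$, and let $\pi:X\to X/Y$, $\pi(x)=x+Y$, be the quotient map. Then the quotient topology $\pi(\tau_F)$ on $X/Y$ is the finest locally convex topology of the extended locally convex space $(X/Y,\pi(\tau))$. Moreover, $(X/Y,\pi(\tau))^*=(X/Y,\pi(\tau_F))^*$.
   Context: An extended seminorm on a vector space $X$ over $\mathbb{R}$ or $\mathbb{C}$ is a map $\rho:X\to[0,\infty]$ with $\rho(\alpha x)=|\alpha|\rho(x)$ and $\rho(x+y)\le\rho(x)+\rho(y)$. An extended locally convex space $(X,\tau)$ is a vector space with the topology induced by a family $\{\rho_i\}$ of extended seminorms (neighborhood base at $x_0$: $\{x:\max_{i\in J}\rho_i(x-x_0)<\varepsilon\}$, $J$ finite, $\varepsilon>0$). A locally convex topology is one induced in this way by finite-valued seminorms. The finest locally convex topology of an elcs $(X,\tau)$ is the locally convex topology $\tau_F\subseteq\tau$ such that every locally convex topology $\sigma\subseteq\tau$ on $X$ satisfies $\sigma\subseteq\tau_F$. For a topology $\eta$ on $X$, $\pi(\eta)$ denotes the quotient topology on $X/Y$ (the finest topology making $\pi$ continuous). $(Z,\sigma)^*$ denotes the set of $\sigma$-continuous linear functionals on $Z$. *)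

theory Defs
  imports "HOL-Analysis.Analysis"
begin

text \<open>A vector space is given by a carrier V, an addition and a scalar multiplication
  over a scalar field 'k (real or complex; |alpha| is norm alpha).\<close>

definition vsub :: "('v \<Rightarrow> 'v \<Rightarrow> 'v) \<Rightarrow> ('k::real_normed_field \<Rightarrow> 'v \<Rightarrow> 'v) \<Rightarrow> 'v \<Rightarrow> 'v \<Rightarrow> 'v" where
  "vsub add smul x y = add x (smul (-1) y)"

definition ext_seminorm :: "'v set \<Rightarrow> ('v \<Rightarrow> 'v \<Rightarrow> 'v) \<Rightarrow> ('k::real_normed_field \<Rightarrow> 'v \<Rightarrow> 'v) \<Rightarrow> ('v \<Rightarrow> ennreal) \<Rightarrow> bool" where
  "ext_seminorm V add smul \<rho> \<longleftrightarrow>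
     (\<forall>c. \<forall>x\<in>V. \<rho> (smul c x) = ennreal (norm c) * \<rho> x) \<and>
     (\<forall>x\<in>V. \<forall>y\<in>V. \<rho> (add x y) \<le> \<rho> x + \<rho> y)"

definition seminorm_topology :: "'v set \<Rightarrow> ('v \<Rightarrow> 'v \<Rightarrow> 'v) \<Rightarrow> ('k::real_normed_field \<Rightarrow> 'v \<Rightarrow> 'v) \<Rightarrow> ('v \<Rightarrow> ennreal) set \<Rightarrow> 'v topology" where
  "seminorm_topology V add smul P = topology (\<lambda>U. U \<subseteq> V \<and>
     (\<forall>x0\<in>U. \<exists>J \<epsilon>. finite J \<and> J \<subseteq> P \<and> \<epsilon> > (0::real) \<and>
        {x\<in>V. \<forall>\<rho>\<in>J. \<rho> (vsub add smul x x0) < ennreal \<epsilon>} \<subseteq> U))"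

definition is_elcs :: "'v set \<Rightarrow> ('v \<Rightarrow> 'v \<Rightarrow> 'v) \<Rightarrow> ('k::real_normed_field \<Rightarrow> 'v \<Rightarrow> 'v) \<Rightarrow> 'v topology \<Rightarrow> bool" where
  "is_elcs V add smul \<tau> \<longleftrightarrow>
     (\<exists>P. (\<forall>\<rho>\<in>P. ext_seminorm V add smul \<rho>) \<and> \<tau> = seminorm_topology V add smul P)"

definition is_lc :: "'v set \<Rightarrow> ('v \<Rightarrow> 'v \<Rightarrow> 'v) \<Rightarrow> ('k::real_normed_field \<Rightarrow> 'v \<Rightarrow> 'v) \<Rightarrow> 'v topology \<Rightarrow> bool" where
  "is_lc V add smul \<tau> \<longleftrightarrow>
     (\<exists>P. (\<forall>\<rho>\<in>P. ext_seminorm V add smul \<rho> \<and> (\<forall>x\<in>V. \<rho> x < \<infinity>)) \<and>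
          \<tau> = seminorm_topology V add smul P)"

definition coarser :: "'v topology \<Rightarrow> 'v topology \<Rightarrow> bool" where
  "coarser \<sigma> \<tau> \<longleftrightarrow> (\<forall>U. openin \<sigma> U \<longrightarrow> openin \<tau> U)"

definition is_finest_lc :: "'v set \<Rightarrow> ('v \<Rightarrow> 'v \<Rightarrow> 'v) \<Rightarrow> ('k::real_normed_field \<Rightarrow> 'v \<Rightarrow> 'v) \<Rightarrow> 'v topology \<Rightarrow> 'v topology \<Rightarrow> bool" where
  "is_finest_lc V add smul \<tau> \<tau>F \<longleftrightarrow>
     is_lc V add smul \<tau>F \<and> coarser \<tau>F \<tau> \<and>
     (\<forall>\<sigma>. is_lc V add smul \<sigma> \<and> coarser \<sigma> \<tau> \<longrightarrow> coarser \<sigma> \<tau>F)"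

definition quotient_top :: "('v \<Rightarrow> 'w) \<Rightarrow> 'v topology \<Rightarrow> 'w topology" where
  "quotient_top \<pi> \<eta> = topology (\<lambda>U. U \<subseteq> \<pi> ` topspace \<eta> \<and> openin \<eta> {x \<in> topspace \<eta>. \<pi> x \<in> U})"

definition cont_dual :: "'v set \<Rightarrow> ('v \<Rightarrow> 'v \<Rightarrow> 'v) \<Rightarrow> ('k::real_normed_field \<Rightarrow> 'v \<Rightarrow> 'v) \<Rightarrow> 'v topology \<Rightarrow> ('v \<Rightarrow> 'k) set" where
  "cont_dual V add smul \<sigma> = {f.
     (\<forall>x\<in>V. \<forall>y\<in>V. f (add x y) = f x + f y) \<and>
     (\<forall>c. \<forall>x\<in>V. f (smul c x) = c * f x) \<and>
     continuous_map \<sigma> euclidean f}"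

definition coset :: "'a::ab_group_add set \<Rightarrow> 'a \<Rightarrow> 'a set" where
  "coset Y x = (\<lambda>y. x + y) ` Y"

definition quot_add :: "'a::ab_group_add set \<Rightarrow> 'a set \<Rightarrow> 'a set" where
  "quot_add A B = {a + b | a b. a \<in> A \<and> b \<in> B}"

definition quot_smul :: "('k \<Rightarrow> 'a::ab_group_add \<Rightarrow> 'a) \<Rightarrow> 'a set \<Rightarrow> 'k \<Rightarrow> 'a set \<Rightarrow> 'a set" where
  "quot_smul sc Y c A = {sc c a + y | a y. a \<in> A \<and> y \<in> Y}"

end

theory Submission
  imports Defs
begin

(* If \<tau> is induced by a family P of extended seminorms, then \<pi>(\<tau>) is induced by the quotient
   seminorms A \<mapsto> inf_{a \<in> A} max_{\<rho> \<in> J} \<rho> a, J \<subseteq> P finite; they are finite-valued when P is,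
   so \<pi>(\<tau>F) is a locally convex topology coarser than \<pi>(\<tau>). Conversely, a locally convex
   topology \<sigma> \<subseteq> \<pi>(\<tau>) induced by seminorms Q is the quotient of the locally convex topology
   on X induced by the seminorms q \<circ> \<pi>. The open sets of the latter are unions of cosets of Y,
   so it is coarser than \<tau>, hence than \<tau>F, and therefore \<sigma> \<subseteq> \<pi>(\<tau>F).
   An elcs and its finest locally convex topology have the same dual: a linear functional f
   is continuous iff the topology of the seminorm |f|, which is locally convex, is coarser. *)

lemma INF_ennreal_const_add':
  fixes c :: ennreal
  assumes "I \<noteq> {}"
  shows "c + (INF i\<in>I. f i) = (INF i\<in>I. c + f i)"
  using continuous_at_Inf_mono[of "\<lambda>x. c + x" "f ` I"]
  using continuous_add[of "at_right (INF i\<in>I. f i)" "\<lambda>x. c" "\<lambda>x. x"] assms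
  by (auto simp: mono_def add_left_mono image_image)

lemma le_INF_add_INF_ennreal:
  fixes L :: ennreal
  assumes "\<And>i j. i \<in> I \<Longrightarrow> j \<in> J \<Longrightarrow> L \<le> f i + g j"
  shows "L \<le> (INF i\<in>I. f i) + (INF j\<in>J. g j)"
proof (cases "I = {} \<or> J = {}")
  case False
  have "L \<le> (INF i\<in>I. INF j\<in>J. f i + g j)"
    using assms by (auto intro!: INF_greatest)
  also have "\<dots> = (INF i\<in>I. f i + (INF j\<in>J. g j))"
    using False by (simp add: INF_ennreal_const_add')
  also have "\<dots> = (INF i\<in>I. f i) + (INF j\<in>J. g j)"
    using False INF_ennreal_const_add'[of I "INF j\<in>J. g j" f] by (simp add: add.commute)
  finally show ?thesis .
qed (auto simp: top_ennreal_def[symmetric])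

lemma INF_mult_left_ennreal:
  assumes "0 < r"
  shows "ennreal r * (INF i\<in>I. f i) = (INF i\<in>I. ennreal r * f i)"
proof (cases "I = {}")
  case False
  have "continuous (at_right (INF i\<in>I. f i)) (\<lambda>x. ennreal r * x)"
    using ennreal_continuous_on_cmult[of "ennreal r" UNIV "\<lambda>x. x"]
    by (simp add: continuous_on_eq_continuous_within continuous_at_imp_continuous_at_within)
  then show ?thesis
    using continuous_at_Inf_mono[of "\<lambda>x. ennreal r * x" "f ` I"] False
    by (auto simp: mono_def mult_left_mono image_image)
qed (use assms in simp)

lemma finite_SUP_less_iff:
  fixes a :: "'a::complete_linorder"
  assumes "finite I" "bot < a"
  shows "(SUP i\<in>I. f i) < a \<longleftrightarrow> (\<forall>i\<in>I. f i < a)"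
  using assms by (cases "I = {}") (auto simp: finite_Sup_less_iff less_SUP_iff)

section \<open>Topologies induced by extended seminorms\<close>

definition seminorm_ball ::
    "'v set \<Rightarrow> ('v \<Rightarrow> 'v \<Rightarrow> 'v) \<Rightarrow> ('k::real_normed_field \<Rightarrow> 'v \<Rightarrow> 'v) \<Rightarrow> ('v \<Rightarrow> ennreal) set
      \<Rightarrow> 'v \<Rightarrow> real \<Rightarrow> 'v set" where
  "seminorm_ball V add smul J x0 e = {x\<in>V. \<forall>\<rho>\<in>J. \<rho> (vsub add smul x x0) < ennreal e}"

lemma seminorm_ball_antimono:
  assumes "J \<subseteq> J'" "e' \<le> e"
  shows "seminorm_ball V add smul J' x0 e' \<subseteq> seminorm_ball V add smul J x0 e"
  using assms ennreal_leI[OF \<open>e' \<le> e\<close>]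
  unfolding seminorm_ball_def by (auto dest: order.strict_trans2)

lemma
  shows openin_seminorm_topology: "openin (seminorm_topology V add smul P) U \<longleftrightarrow> U \<subseteq> V \<and>
      (\<forall>x0\<in>U. \<exists>J e. finite J \<and> J \<subseteq> P \<and> 0 < e \<and> seminorm_ball V add smul J x0 e \<subseteq> U)"
    and topspace_seminorm_topology: "topspace (seminorm_topology V add smul P) = V"
proof -
  define nbhd where "nbhd U \<longleftrightarrow> U \<subseteq> V \<and>
      (\<forall>x0\<in>U. \<exists>J e. finite J \<and> J \<subseteq> P \<and> 0 < e \<and> seminorm_ball V add smul J x0 e \<subseteq> U)" for U
  have nbhdD: "\<exists>J e. finite J \<and> J \<subseteq> P \<and> 0 < e \<and> seminorm_ball V add smul J x0 e \<subseteq> U"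
    if "nbhd U" "x0 \<in> U" for U x0
    using that by (simp add: nbhd_def)
  have nbhd_subset: "U \<subseteq> V" if "nbhd U" for U
    using that by (simp add: nbhd_def)
  have "nbhd (S \<inter> T)" if S: "nbhd S" and T: "nbhd T" for S T
    unfolding nbhd_def
  proof (intro conjI ballI)
    show "S \<inter> T \<subseteq> V" using nbhd_subset[OF S] by blast
    fix x0 assume "x0 \<in> S \<inter> T"
    then obtain J1 e1 where J1: "finite J1" "J1 \<subseteq> P" "0 < e1" "seminorm_ball V add smul J1 x0 e1 \<subseteq> S"
      using nbhdD[OF S, of x0] by auto
    obtain J2 e2 where J2: "finite J2" "J2 \<subseteq> P" "0 < e2" "seminorm_ball V add smul J2 x0 e2 \<subseteq> T"
      using nbhdD[OF T, of x0] \<open>x0 \<in> S \<inter> T\<close> by auto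
    have "seminorm_ball V add smul (J1 \<union> J2) x0 (min e1 e2)
        \<subseteq> seminorm_ball V add smul J1 x0 e1 \<inter> seminorm_ball V add smul J2 x0 e2"
      by (intro Int_greatest seminorm_ball_antimono) auto
    then have "seminorm_ball V add smul (J1 \<union> J2) x0 (min e1 e2) \<subseteq> S \<inter> T"
      using J1(4) J2(4) by blast
    then show "\<exists>J e. finite J \<and> J \<subseteq> P \<and> 0 < e \<and> seminorm_ball V add smul J x0 e \<subseteq> S \<inter> T"
      using J1 J2 by (intro exI[of _ "J1 \<union> J2"] exI[of _ "min e1 e2"]) auto
  qed
  moreover have "nbhd (\<Union>K)" if K: "\<forall>U\<in>K. nbhd U" for K
    unfolding nbhd_def
  proof (intro conjI ballI)
    show "\<Union>K \<subseteq> V" using K nbhd_subset by blast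
    fix x0 assume "x0 \<in> \<Union>K"
    then obtain U where "U \<in> K" "x0 \<in> U" by blast
    then show "\<exists>J e. finite J \<and> J \<subseteq> P \<and> 0 < e \<and> seminorm_ball V add smul J x0 e \<subseteq> \<Union>K"
      using nbhdD[of U x0] K by (meson Sup_upper order_trans)
  qed
  ultimately have "istopology nbhd"
    unfolding istopology_def by blast
  then have openin: "openin (seminorm_topology V add smul P) = nbhd"
    unfolding seminorm_topology_def nbhd_def seminorm_ball_def by simp
  then show "openin (seminorm_topology V add smul P) U \<longleftrightarrow> U \<subseteq> V \<and>
      (\<forall>x0\<in>U. \<exists>J e. finite J \<and> J \<subseteq> P \<and> 0 < e \<and> seminorm_ball V add smul J x0 e \<subseteq> U)"
    by (simp add: nbhd_def)
  have "nbhd V"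
    unfolding nbhd_def seminorm_ball_def by (auto intro!: exI[of _ "{}"] exI[of _ 1])
  then show "topspace (seminorm_topology V add smul P) = V"
    unfolding topspace_def openin nbhd_def by auto
qed

lemma openin_seminorm_topologyD:
  assumes "openin (seminorm_topology V add smul P) U" "x0 \<in> U"
  shows "\<exists>J e. finite J \<and> J \<subseteq> P \<and> 0 < e \<and> seminorm_ball V add smul J x0 e \<subseteq> U"
  using assms(1)[unfolded openin_seminorm_topology, THEN conjunct2] assms(2) by (rule bspec)

lemma openin_seminorm_topology_indistinguishable:
  assumes "openin (seminorm_topology V add smul P) U" "x \<in> U" "x' \<in> V"
    and "\<forall>\<rho>\<in>P. \<rho> (vsub add smul x' x) = 0"
  shows "x' \<in> U"
proof -
  from openin_seminorm_topologyD[OF assms(1,2)]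
  obtain J e where J: "J \<subseteq> P" "0 < e" "seminorm_ball V add smul J x e \<subseteq> U"
    by iprover
  have "\<rho> (vsub add smul x' x) < ennreal e" if "\<rho> \<in> J" for \<rho>
  proof -
    have "\<rho> (vsub add smul x' x) = 0" using that J(1) assms(4) by blast
    then show ?thesis using J(2) by simp
  qed
  then have "x' \<in> seminorm_ball V add smul J x e"
    using assms(3) unfolding seminorm_ball_def by blast
  then show ?thesis using J(3) by blast
qed

lemma coarser_seminorm_topology_dominated:
  assumes "\<forall>\<rho>'\<in>P'. \<exists>J. finite J \<and> J \<subseteq> P \<and> (\<forall>x. \<rho>' x \<le> (SUP \<rho>\<in>J. \<rho> x))"
  shows "coarser (seminorm_topology V add smul P') (seminorm_topology V add smul P)"
  unfolding coarser_def
proof (intro allI impI)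
  fix U assume U: "openin (seminorm_topology V add smul P') U"
  have "\<exists>D. \<forall>\<rho>'\<in>P'.
      finite (D \<rho>') \<and> D \<rho>' \<subseteq> P \<and> (\<forall>x. \<rho>' x \<le> (SUP \<rho>\<in>D \<rho>'. \<rho> x))"
    using assms by (rule bchoice)
  then obtain D where D: "\<forall>\<rho>'\<in>P'.
      finite (D \<rho>') \<and> D \<rho>' \<subseteq> P \<and> (\<forall>x. \<rho>' x \<le> (SUP \<rho>\<in>D \<rho>'. \<rho> x))"
    by (elim exE)
  have "\<exists>J e. finite J \<and> J \<subseteq> P \<and> 0 < e \<and> seminorm_ball V add smul J x0 e \<subseteq> U" if "x0 \<in> U" for x0
  proof -
    from openin_seminorm_topologyD[OF U that] obtain J' e
      where J': "finite J'" "J' \<subseteq> P'" "0 < e" "seminorm_ball V add smul J' x0 e \<subseteq> U"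
      by iprover
    have "seminorm_ball V add smul (\<Union>(D ` J')) x0 e \<subseteq> seminorm_ball V add smul J' x0 e"
    proof
      fix x assume "x \<in> seminorm_ball V add smul (\<Union>(D ` J')) x0 e"
      then have x: "x \<in> V" "\<forall>\<rho>\<in>\<Union>(D ` J'). \<rho> (vsub add smul x x0) < ennreal e"
        unfolding seminorm_ball_def by auto
      have "\<rho>' (vsub add smul x x0) < ennreal e" if "\<rho>' \<in> J'" for \<rho>'
      proof -
        have D\<rho>': "finite (D \<rho>')" "\<forall>x. \<rho>' x \<le> (SUP \<rho>\<in>D \<rho>'. \<rho> x)"
          using D that J'(2) by auto
        have "\<rho>' (vsub add smul x x0) \<le> (SUP \<rho>\<in>D \<rho>'. \<rho> (vsub add smul x x0))"
          using D\<rho>'(2) by blast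
        also have "\<dots> < ennreal e"
          using x(2) that D\<rho>'(1) J'(3) by (subst finite_SUP_less_iff) (auto simp: bot_ennreal)
        finally show ?thesis .
      qed
      then show "x \<in> seminorm_ball V add smul J' x0 e"
        using x(1) unfolding seminorm_ball_def by blast
    qed
    then show ?thesis
      using J' D by (intro exI[of _ "\<Union>(D ` J')"] exI[of _ e]) auto
  qed
  moreover have "U \<subseteq> V"
    using U unfolding openin_seminorm_topology by (rule conjunct1)
  ultimately show "openin (seminorm_topology V add smul P) U"
    unfolding openin_seminorm_topology by blast
qed

lemma ext_seminorm_SUP:
  assumes "finite J" "\<forall>\<rho>\<in>J. ext_seminorm V add smul \<rho>"
  shows "ext_seminorm V add smul (\<lambda>x. SUP \<rho>\<in>J. \<rho> x)"
  unfolding ext_seminorm_def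
proof (intro conjI ballI allI)
  fix c x assume "x \<in> V"
  then show "(SUP \<rho>\<in>J. \<rho> (smul c x)) = ennreal (norm c) * (SUP \<rho>\<in>J. \<rho> x)"
    using assms(2) by (simp add: ext_seminorm_def SUP_mult_left_ennreal)
next
  fix x y assume "x \<in> V" "y \<in> V"
  then have "\<rho> (add x y) \<le> (SUP \<rho>\<in>J. \<rho> x) + (SUP \<rho>\<in>J. \<rho> y)" if "\<rho> \<in> J" for \<rho>
  proof -
    have "\<rho> (add x y) \<le> \<rho> x + \<rho> y"
      using assms(2) that \<open>x \<in> V\<close> \<open>y \<in> V\<close> unfolding ext_seminorm_def by blast
    also have "\<dots> \<le> (SUP \<rho>\<in>J. \<rho> x) + (SUP \<rho>\<in>J. \<rho> y)"
      using that by (intro add_mono SUP_upper)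
    finally show ?thesis .
  qed
  then show "(SUP \<rho>\<in>J. \<rho> (add x y)) \<le> (SUP \<rho>\<in>J. \<rho> x) + (SUP \<rho>\<in>J. \<rho> y)"
    by (rule SUP_least)
qed

lemma is_elcs_if_is_lc: "is_lc V add smul \<tau> \<Longrightarrow> is_elcs V add smul \<tau>"
  unfolding is_lc_def is_elcs_def by blast

lemma topspace_is_elcs: "is_elcs V add smul \<tau> \<Longrightarrow> topspace \<tau> = V"
  unfolding is_elcs_def by (auto simp: topspace_seminorm_topology)

section \<open>Quotient topologies\<close>

lemma openin_quotient_top:
  "openin (quotient_top \<pi> \<eta>) U \<longleftrightarrow> U \<subseteq> \<pi> ` topspace \<eta> \<and> openin \<eta> {x \<in> topspace \<eta>. \<pi> x \<in> U}"
proof -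
  define quotient_open where
    "quotient_open U \<longleftrightarrow> U \<subseteq> \<pi> ` topspace \<eta> \<and> openin \<eta> {x \<in> topspace \<eta>. \<pi> x \<in> U}" for U
  have "quotient_open (S \<inter> T)" if "quotient_open S" "quotient_open T" for S T
  proof -
    have "{x \<in> topspace \<eta>. \<pi> x \<in> S \<inter> T}
        = {x \<in> topspace \<eta>. \<pi> x \<in> S} \<inter> {x \<in> topspace \<eta>. \<pi> x \<in> T}"
      by auto
    then show ?thesis
      using that unfolding quotient_open_def by (auto intro: openin_Int)
  qed
  moreover have "quotient_open (\<Union>K)" if "\<forall>U\<in>K. quotient_open U" for K
  proof -
    have "{x \<in> topspace \<eta>. \<pi> x \<in> \<Union>K} = (\<Union>U\<in>K. {x \<in> topspace \<eta>. \<pi> x \<in> U})"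
      by auto
    then show ?thesis
      using that unfolding quotient_open_def by (auto intro: openin_Union)
  qed
  ultimately have "istopology quotient_open"
    unfolding istopology_def by blast
  then have "openin (quotient_top \<pi> \<eta>) = quotient_open"
    unfolding quotient_top_def quotient_open_def by simp
  then show ?thesis
    by (simp add: quotient_open_def)
qed

lemma coarser_quotient_top:
  assumes "topspace \<sigma> = topspace \<tau>" "coarser \<sigma> \<tau>"
  shows "coarser (quotient_top \<pi> \<sigma>) (quotient_top \<pi> \<tau>)"
  using assms unfolding coarser_def openin_quotient_top by auto

lemma coarser_if_coarser_quotient_top:
  assumes "topspace \<sigma> = topspace \<tau>"
    and saturated: "\<And>U. openin \<sigma> U \<Longrightarrow> {x \<in> topspace \<sigma>. \<pi> x \<in> \<pi> ` U} = U"
    and "coarser (quotient_top \<pi> \<sigma>) (quotient_top \<pi> \<tau>)"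
  shows "coarser \<sigma> \<tau>"
  unfolding coarser_def
proof (intro allI impI)
  fix U assume "openin \<sigma> U"
  then have "openin (quotient_top \<pi> \<sigma>) (\<pi> ` U)"
    unfolding openin_quotient_top saturated[OF \<open>openin \<sigma> U\<close>]
    using openin_subset by fastforce
  then have "openin (quotient_top \<pi> \<tau>) (\<pi> ` U)"
    using assms(3) unfolding coarser_def by blast
  then show "openin \<tau> U"
    unfolding openin_quotient_top using assms(1) saturated[OF \<open>openin \<sigma> U\<close>] by simp
qed

lemma continuous_map_coarser:
  assumes "topspace \<sigma> = topspace \<tau>" "coarser \<sigma> \<tau>" "continuous_map \<sigma> X f"
  shows "continuous_map \<tau> X f"
  using assms unfolding coarser_def continuous_map_def by auto

section \<open>Continuous linear functionals\<close>

lemma vsub_linear: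
  assumes "\<forall>x\<in>V. \<forall>y\<in>V. f (add x y) = f x + f y" "\<forall>c. \<forall>x\<in>V. f (smul c x) = c * f x"
    and "\<forall>c. \<forall>x\<in>V. smul c x \<in> V" "x \<in> V" "y \<in> V"
  shows "f (vsub add smul x y) = f x - (f y :: 'k::real_normed_field)"
  using assms unfolding vsub_def by simp

lemma ext_seminorm_norm_linear:
  fixes f :: "'v \<Rightarrow> 'k::real_normed_field"
  assumes "\<forall>x\<in>V. \<forall>y\<in>V. f (add x y) = f x + f y" "\<forall>c. \<forall>x\<in>V. f (smul c x) = c * f x"
  shows "ext_seminorm V add smul (\<lambda>x. ennreal (norm (f x)))"
  using assms unfolding ext_seminorm_def
  by (simp add: norm_mult ennreal_mult' norm_triangle_ineq ennreal_plus[symmetric] ennreal_leI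
      del: ennreal_plus)

context
  fixes f :: "'v \<Rightarrow> 'k::real_normed_field" and V add smul
  assumes additive: "\<forall>x\<in>V. \<forall>y\<in>V. f (add x y) = f x + f y"
    and homogeneous: "\<forall>c. \<forall>x\<in>V. f (smul c x) = c * f x"
    and scale_closed: "\<forall>c. \<forall>x\<in>V. smul c x \<in> V"
begin

lemma seminorm_ball_norm_linear:
  assumes "x0 \<in> V"
  shows "seminorm_ball V add smul {\<lambda>x. ennreal (norm (f x))} x0 e = {x \<in> V. f x \<in> ball (f x0) e}"
  using vsub_linear[OF additive homogeneous scale_closed _ assms]
  by (auto simp: seminorm_ball_def dist_norm norm_minus_commute ennreal_less_iff)

lemma continuous_map_iff_coarser_seminorm_topology:
  assumes "topspace \<sigma> = V"
  shows "continuous_map \<sigma> euclidean f \<longleftrightarrow>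
    coarser (seminorm_topology V add smul {\<lambda>x. ennreal (norm (f x))}) \<sigma>"
proof
  assume cont: "continuous_map \<sigma> euclidean f"
  show "coarser (seminorm_topology V add smul {\<lambda>x. ennreal (norm (f x))}) \<sigma>"
    unfolding coarser_def
  proof (intro allI impI)
    fix U assume U: "openin (seminorm_topology V add smul {\<lambda>x. ennreal (norm (f x))}) U"
    show "openin \<sigma> U"
    proof (subst openin_subopen, intro ballI)
      fix x0 assume "x0 \<in> U"
      from openin_seminorm_topologyD[OF U this] obtain J e where
        J: "J \<subseteq> {\<lambda>x. ennreal (norm (f x))}" "0 < e" "seminorm_ball V add smul J x0 e \<subseteq> U"
        by iprover
      have "x0 \<in> V"
        using U \<open>x0 \<in> U\<close> unfolding openin_seminorm_topology by blast
      have "openin \<sigma> {x \<in> V. f x \<in> ball (f x0) e}"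
        using cont assms unfolding continuous_map_def by auto
      moreover have "{x \<in> V. f x \<in> ball (f x0) e} = seminorm_ball V add smul {\<lambda>x. ennreal (norm (f x))} x0 e"
        using \<open>x0 \<in> V\<close> by (rule seminorm_ball_norm_linear[symmetric])
      moreover have "\<dots> \<subseteq> seminorm_ball V add smul J x0 e"
        using J(1) by (rule seminorm_ball_antimono) simp
      ultimately show "\<exists>T. openin \<sigma> T \<and> x0 \<in> T \<and> T \<subseteq> U"
        using \<open>x0 \<in> V\<close> J(2,3) by (intro exI[of _ "{x \<in> V. f x \<in> ball (f x0) e}"]) auto
    qed
  qed
next
  assume coarser: "coarser (seminorm_topology V add smul {\<lambda>x. ennreal (norm (f x))}) \<sigma>"
  have "openin (seminorm_topology V add smul {\<lambda>x. ennreal (norm (f x))}) {x \<in> V. f x \<in> W}"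
    if "open W" for W
    unfolding openin_seminorm_topology
  proof (intro conjI ballI)
    fix x0 assume x0: "x0 \<in> {x \<in> V. f x \<in> W}"
    then obtain e where "0 < e" "ball (f x0) e \<subseteq> W"
      using \<open>open W\<close> open_contains_ball by blast
    then show "\<exists>J e. finite J \<and> J \<subseteq> {\<lambda>x. ennreal (norm (f x))} \<and> 0 < e \<and>
        seminorm_ball V add smul J x0 e \<subseteq> {x \<in> V. f x \<in> W}"
      using x0 by (intro exI[of _ "{\<lambda>x. ennreal (norm (f x))}"] exI[of _ e])
        (auto simp: seminorm_ball_norm_linear)
  qed auto
  then show "continuous_map \<sigma> euclidean f"
    using coarser assms unfolding continuous_map_def coarser_def by auto
qed

end

lemma cont_dual_eq_if_finest_lc:
  assumes scale_closed: "\<forall>c. \<forall>x\<in>V. smul c x \<in> V"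
    and elcs: "is_elcs V add smul \<tau>" and finest: "is_finest_lc V add smul \<tau> \<tau>F"
  shows "cont_dual V add smul \<tau> = cont_dual V add smul \<tau>F"
proof -
  have topspace: "topspace \<tau> = V" "topspace \<tau>F = V"
    using elcs finest topspace_is_elcs is_elcs_if_is_lc unfolding is_finest_lc_def by blast+
  show ?thesis
  proof (intro equalityI subsetI)
    fix f assume "f \<in> cont_dual V add smul \<tau>F"
    then show "f \<in> cont_dual V add smul \<tau>"
      using continuous_map_coarser[of \<tau>F \<tau>] finest topspace
      unfolding cont_dual_def is_finest_lc_def by auto
  next
    fix f assume f: "f \<in> cont_dual V add smul \<tau>"
    let ?\<sigma> = "seminorm_topology V add smul {\<lambda>x. ennreal (norm (f x))}"
    have linear: "\<forall>x\<in>V. \<forall>y\<in>V. f (add x y) = f x + f y" "\<forall>c. \<forall>x\<in>V. f (smul c x) = c * f x"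
      using f unfolding cont_dual_def by auto
    have "coarser ?\<sigma> \<tau>"
      using f continuous_map_iff_coarser_seminorm_topology[OF linear scale_closed topspace(1)]
      unfolding cont_dual_def by auto
    moreover have "is_lc V add smul ?\<sigma>"
      unfolding is_lc_def using ext_seminorm_norm_linear[OF linear] by auto
    ultimately have "coarser ?\<sigma> \<tau>F"
      using finest unfolding is_finest_lc_def by blast
    then show "f \<in> cont_dual V add smul \<tau>F"
      using continuous_map_iff_coarser_seminorm_topology[OF linear scale_closed topspace(2)] linear
      unfolding cont_dual_def by auto
  qed
qed

section \<open>Quotient by a linear subspace\<close>

definition quotient_seminorm :: "('a \<Rightarrow> ennreal) \<Rightarrow> 'a set \<Rightarrow> ennreal" where
  "quotient_seminorm p A = (INF a\<in>A. p a)"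

text \<open>Basic neighbourhoods are cut out by finitely many seminorms at once, and taking quotients
  does not commute with finite maxima; hence the maxima are formed before passing to the quotient.\<close>

definition quotient_seminorms :: "('a \<Rightarrow> ennreal) set \<Rightarrow> ('a set \<Rightarrow> ennreal) set" where
  "quotient_seminorms P = {quotient_seminorm (\<lambda>x. SUP \<rho>\<in>J. \<rho> x) | J. finite J \<and> J \<subseteq> P}"

lemma quotient_seminormsE:
  assumes "q \<in> quotient_seminorms P"
  obtains J where "finite J" "J \<subseteq> P" "q = quotient_seminorm (\<lambda>x. SUP \<rho>\<in>J. \<rho> x)"
  using assms unfolding quotient_seminorms_def by blast

locale vector_space_quotient = vector_space scale
  for scale :: "'k::real_normed_field \<Rightarrow> 'a::ab_group_add \<Rightarrow> 'a" +
  fixes Y :: "'a set"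
  assumes subspace_Y: "subspace Y"
begin

lemma coset_add: "quot_add (coset Y x) (coset Y x') = coset Y (x + x')"
  unfolding quot_add_def coset_def
proof (intro equalityI subsetI)
  fix z assume "z \<in> {a + b |a b. a \<in> (+) x ` Y \<and> b \<in> (+) x' ` Y}"
  then obtain y y' where "y \<in> Y" "y' \<in> Y" "z = (x + x') + (y + y')"
    by (auto simp: ac_simps)
  then show "z \<in> (+) (x + x') ` Y"
    using subspace_add[OF subspace_Y] by blast
next
  fix z assume "z \<in> (+) (x + x') ` Y"
  then obtain y where "y \<in> Y" "z = (x + y) + (x' + 0)"
    by (auto simp: ac_simps)
  then show "z \<in> {a + b |a b. a \<in> (+) x ` Y \<and> b \<in> (+) x' ` Y}"
    using subspace_0[OF subspace_Y] by blast
qed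

lemma coset_scale: "quot_smul scale Y c (coset Y x) = coset Y (scale c x)"
  unfolding quot_smul_def coset_def
proof (intro equalityI subsetI)
  fix z assume "z \<in> {scale c a + y |a y. a \<in> (+) x ` Y \<and> y \<in> Y}"
  then obtain y y' where "y \<in> Y" "y' \<in> Y" "z = scale c x + (scale c y + y')"
    by (auto simp: scale_right_distrib ac_simps)
  then show "z \<in> (+) (scale c x) ` Y"
    using subspace_add[OF subspace_Y] subspace_scale[OF subspace_Y] by blast
next
  fix z assume "z \<in> (+) (scale c x) ` Y"
  then obtain y where "y \<in> Y" "z = scale c (x + 0) + y"
    by auto
  then show "z \<in> {scale c a + y |a y. a \<in> (+) x ` Y \<and> y \<in> Y}"
    using subspace_0[OF subspace_Y] by blast
qed

lemma coset_shift:
  assumes "y \<in> Y"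
  shows "coset Y (x + y) = coset Y x"
proof -
  have "(+) y ` Y = Y"
  proof
    show "(+) y ` Y \<subseteq> Y"
      using assms subspace_add[OF subspace_Y] by blast
    show "Y \<subseteq> (+) y ` Y"
    proof
      fix z assume "z \<in> Y"
      then have "z - y \<in> Y"
        using assms subspace_diff[OF subspace_Y] by blast
      then show "z \<in> (+) y ` Y"
        by (rule rev_image_eqI) simp
    qed
  qed
  moreover have "coset Y (x + y) = (+) x ` ((+) y ` Y)"
    unfolding coset_def by (simp add: image_image add.assoc)
  ultimately show ?thesis
    unfolding coset_def by simp
qed

lemma vsub_eq_diff: "vsub (+) scale x y = x - y"
  unfolding vsub_def by simp

lemma vsub_coset: "vsub quot_add (quot_smul scale Y) (coset Y x) (coset Y x') = coset Y (x - x')"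
  unfolding vsub_def coset_scale coset_add by simp

lemma quot_smul_closed: "\<forall>c. \<forall>A\<in>range (coset Y). quot_smul scale Y c A \<in> range (coset Y)"
  by (auto simp: coset_scale)

lemma quotient_seminorm_coset: "quotient_seminorm p (coset Y x) = (INF y\<in>Y. p (x + y))"
  unfolding quotient_seminorm_def coset_def by (simp add: image_image)

lemma quotient_seminorm_le: "quotient_seminorm p (coset Y x) \<le> p x"
  unfolding quotient_seminorm_coset using INF_lower[OF subspace_0[OF subspace_Y], of "\<lambda>y. p (x + y)"]
  by simp

lemma ext_seminorm_zero:
  assumes "ext_seminorm UNIV (+) scale p"
  shows "p 0 = 0"
  using assms unfolding ext_seminorm_def by (metis scale_zero_left norm_zero ennreal_0 mult_zero_left UNIV_I)

lemma scale_image_subspace: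
  assumes "c \<noteq> 0"
  shows "scale c ` Y = Y"
proof
  show "scale c ` Y \<subseteq> Y"
    using subspace_scale[OF subspace_Y] by blast
  show "Y \<subseteq> scale c ` Y"
  proof
    fix y assume "y \<in> Y"
    then show "y \<in> scale c ` Y"
      using assms subspace_scale[OF subspace_Y] by (intro rev_image_eqI[of "scale (inverse c) y"]) auto
  qed
qed

lemma ext_seminorm_quotient_seminorm:
  assumes p: "ext_seminorm UNIV (+) scale p"
  shows "ext_seminorm (range (coset Y)) quot_add (quot_smul scale Y) (quotient_seminorm p)"
  unfolding ext_seminorm_def
proof (intro conjI ballI allI)
  fix c A assume "A \<in> range (coset Y)"
  then obtain x where A: "A = coset Y x" by blast
  show "quotient_seminorm p (quot_smul scale Y c A) = ennreal (norm c) * quotient_seminorm p A"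
  proof (cases "c = 0")
    case True
    then show ?thesis
      using quotient_seminorm_le[of p 0] ext_seminorm_zero[OF p] by (simp add: A coset_scale)
  next
    case False
    have "quotient_seminorm p (quot_smul scale Y c A) = (INF y\<in>scale c ` Y. p (scale c x + y))"
      unfolding A coset_scale quotient_seminorm_coset scale_image_subspace[OF False] ..
    also have "\<dots> = (INF y\<in>Y. ennreal (norm c) * p (x + y))"
      using p unfolding ext_seminorm_def by (simp add: image_image flip: scale_right_distrib)
    also have "\<dots> = ennreal (norm c) * quotient_seminorm p A"
      unfolding A quotient_seminorm_coset using False by (simp add: INF_mult_left_ennreal)
    finally show ?thesis .
  qed
next
  fix A B assume "A \<in> range (coset Y)" "B \<in> range (coset Y)"
  then obtain x x' where A: "A = coset Y x" and B: "B = coset Y x'" by blast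
  have "quotient_seminorm p (coset Y (x + x')) \<le> p (x + y) + p (x' + y')"
    if "y \<in> Y" "y' \<in> Y" for y y'
  proof -
    have "quotient_seminorm p (coset Y (x + x')) = quotient_seminorm p (coset Y ((x + y) + (x' + y')))"
      using coset_shift[OF subspace_add[OF subspace_Y that], of "x + x'"] by (simp add: ac_simps)
    also have "\<dots> \<le> p (x + y) + p (x' + y')"
      using quotient_seminorm_le p unfolding ext_seminorm_def by (blast intro: order.trans)
    finally show ?thesis .
  qed
  then show "quotient_seminorm p (quot_add A B) \<le> quotient_seminorm p A + quotient_seminorm p B"
    unfolding A B coset_add quotient_seminorm_coset[of p x] quotient_seminorm_coset[of p x']
    by (rule le_INF_add_INF_ennreal)
qed

lemma ext_seminorm_comp_coset:
  assumes "ext_seminorm (range (coset Y)) quot_add (quot_smul scale Y) q"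
  shows "ext_seminorm UNIV (+) scale (q \<circ> coset Y)"
  using assms unfolding ext_seminorm_def by (simp add: coset_scale[symmetric] coset_add[symmetric])

lemma comp_coset_vanishes:
  assumes "ext_seminorm (range (coset Y)) quot_add (quot_smul scale Y) q" "coset Y x' = coset Y x"
  shows "(q \<circ> coset Y) (vsub (+) scale x' x) = 0"
proof -
  have "coset Y (x' - x) = coset Y (x - x)"
    using vsub_coset[of x' x] vsub_coset[of x x] assms(2) by simp
  also have "\<dots> = quot_smul scale Y 0 (coset Y 0)"
    by (simp add: coset_scale)
  finally show ?thesis
    using assms(1) unfolding ext_seminorm_def by (simp add: vsub_eq_diff)
qed

lemma coset_preimage_seminorm_ball:
  "{x. coset Y x \<in> seminorm_ball (range (coset Y)) quot_add (quot_smul scale Y) J (coset Y x0) e}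
   = seminorm_ball UNIV (+) scale ((\<lambda>q. q \<circ> coset Y) ` J) x0 e"
  unfolding seminorm_ball_def by (auto simp: vsub_coset vsub_eq_diff)

lemma openin_preimage_coset:
  assumes U: "openin (seminorm_topology (range (coset Y)) quot_add (quot_smul scale Y) Q) U"
  shows "openin (seminorm_topology UNIV (+) scale ((\<lambda>q. q \<circ> coset Y) ` Q)) {x. coset Y x \<in> U}"
  unfolding openin_seminorm_topology
proof (intro conjI ballI)
  fix x0 assume "x0 \<in> {x. coset Y x \<in> U}"
  then have "coset Y x0 \<in> U" by simp
  from openin_seminorm_topologyD[OF U this] obtain J e where J: "finite J" "J \<subseteq> Q" "0 < e"
    "seminorm_ball (range (coset Y)) quot_add (quot_smul scale Y) J (coset Y x0) e \<subseteq> U"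
    by iprover
  then have "seminorm_ball UNIV (+) scale ((\<lambda>q. q \<circ> coset Y) ` J) x0 e \<subseteq> {x. coset Y x \<in> U}"
    unfolding coset_preimage_seminorm_ball[symmetric] by auto
  then show "\<exists>J e. finite J \<and> J \<subseteq> (\<lambda>q. q \<circ> coset Y) ` Q \<and> 0 < e \<and>
      seminorm_ball UNIV (+) scale J x0 e \<subseteq> {x. coset Y x \<in> U}"
    using J(1-3) by (intro exI[of _ "(\<lambda>q. q \<circ> coset Y) ` J"] exI[of _ e]) auto
qed auto

lemma seminorm_topology_quotient_eq_quotient_top:
  "seminorm_topology (range (coset Y)) quot_add (quot_smul scale Y) Q
   = quotient_top (coset Y) (seminorm_topology UNIV (+) scale ((\<lambda>q. q \<circ> coset Y) ` Q))"
  unfolding topology_eq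
proof (intro allI iffI)
  fix U assume U: "openin (seminorm_topology (range (coset Y)) quot_add (quot_smul scale Y) Q) U"
  then have "U \<subseteq> range (coset Y)"
    unfolding openin_seminorm_topology by (rule conjunct1)
  then show "openin (quotient_top (coset Y) (seminorm_topology UNIV (+) scale ((\<lambda>q. q \<circ> coset Y) ` Q))) U"
    using openin_preimage_coset[OF U] unfolding openin_quotient_top topspace_seminorm_topology by simp
next
  fix U assume "openin (quotient_top (coset Y) (seminorm_topology UNIV (+) scale ((\<lambda>q. q \<circ> coset Y) ` Q))) U"
  then have U: "U \<subseteq> range (coset Y)"
    and preimage: "openin (seminorm_topology UNIV (+) scale ((\<lambda>q. q \<circ> coset Y) ` Q)) {x. coset Y x \<in> U}"
    unfolding openin_quotient_top topspace_seminorm_topology by auto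
  show "openin (seminorm_topology (range (coset Y)) quot_add (quot_smul scale Y) Q) U"
    unfolding openin_seminorm_topology
  proof (intro conjI ballI U)
    fix A0 assume "A0 \<in> U"
    then obtain x0 where A0: "A0 = coset Y x0" using U by blast
    then have "x0 \<in> {x. coset Y x \<in> U}" using \<open>A0 \<in> U\<close> by simp
    from openin_seminorm_topologyD[OF preimage this] obtain J' e where J': "finite J'"
      "J' \<subseteq> (\<lambda>q. q \<circ> coset Y) ` Q" "0 < e" "seminorm_ball UNIV (+) scale J' x0 e \<subseteq> {x. coset Y x \<in> U}"
      by iprover
    then obtain J where J: "finite J" "J \<subseteq> Q" "J' = (\<lambda>q. q \<circ> coset Y) ` J"
      by (meson finite_subset_image)
    have "seminorm_ball (range (coset Y)) quot_add (quot_smul scale Y) J A0 e \<subseteq> U"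
    proof
      fix A assume A: "A \<in> seminorm_ball (range (coset Y)) quot_add (quot_smul scale Y) J A0 e"
      then obtain x where x: "A = coset Y x"
        unfolding seminorm_ball_def by blast
      then have "x \<in> seminorm_ball UNIV (+) scale J' x0 e"
        using A unfolding A0 J(3) coset_preimage_seminorm_ball[symmetric] by simp
      then show "A \<in> U"
        using J'(4) x by blast
    qed
    then show "\<exists>J e. finite J \<and> J \<subseteq> Q \<and> 0 < e \<and>
        seminorm_ball (range (coset Y)) quot_add (quot_smul scale Y) J A0 e \<subseteq> U"
      using J J'(3) by blast
  qed
qed

lemma coarser_quotient_top_seminorm_topology:
  "coarser (quotient_top (coset Y) (seminorm_topology UNIV (+) scale P))
    (seminorm_topology (range (coset Y)) quot_add (quot_smul scale Y) (quotient_seminorms P))"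
  unfolding coarser_def
proof (intro allI impI)
  fix U assume "openin (quotient_top (coset Y) (seminorm_topology UNIV (+) scale P)) U"
  then have U: "U \<subseteq> range (coset Y)"
    and preimage: "openin (seminorm_topology UNIV (+) scale P) {x. coset Y x \<in> U}"
    unfolding openin_quotient_top topspace_seminorm_topology by auto
  show "openin (seminorm_topology (range (coset Y)) quot_add (quot_smul scale Y) (quotient_seminorms P)) U"
    unfolding openin_seminorm_topology
  proof (intro conjI ballI U)
    fix A0 assume "A0 \<in> U"
    then obtain x0 where A0: "A0 = coset Y x0" using U by blast
    then have "x0 \<in> {x. coset Y x \<in> U}" using \<open>A0 \<in> U\<close> by simp
    from openin_seminorm_topologyD[OF preimage this] obtain J e where J: "finite J" "J \<subseteq> P" "0 < e"
      "seminorm_ball UNIV (+) scale J x0 e \<subseteq> {x. coset Y x \<in> U}"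
      by iprover
    let ?q = "quotient_seminorm (\<lambda>x. SUP \<rho>\<in>J. \<rho> x)"
    have "seminorm_ball (range (coset Y)) quot_add (quot_smul scale Y) {?q} A0 e \<subseteq> U"
    proof
      fix A assume A: "A \<in> seminorm_ball (range (coset Y)) quot_add (quot_smul scale Y) {?q} A0 e"
      then obtain x where x: "A = coset Y x"
        unfolding seminorm_ball_def by blast
      then have "?q (coset Y (x - x0)) < ennreal e"
        using A unfolding A0 seminorm_ball_def by (simp add: vsub_coset)
      then obtain y where "y \<in> Y" "(SUP \<rho>\<in>J. \<rho> (x - x0 + y)) < ennreal e"
        unfolding quotient_seminorm_coset INF_less_iff by blast
      then have "x + y \<in> seminorm_ball UNIV (+) scale J x0 e"
        using J(1,3) unfolding seminorm_ball_def
        by (simp add: vsub_eq_diff finite_SUP_less_iff bot_ennreal diff_add_eq)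
      then show "A \<in> U"
        using J(4) x coset_shift[OF \<open>y \<in> Y\<close>] by auto
    qed
    then show "\<exists>J e. finite J \<and> J \<subseteq> quotient_seminorms P \<and> 0 < e \<and>
        seminorm_ball (range (coset Y)) quot_add (quot_smul scale Y) J A0 e \<subseteq> U"
      using J(1-3) unfolding quotient_seminorms_def by (intro exI[of _ "{?q}"] exI[of _ e]) auto
  qed
qed

lemma quotient_top_seminorm_topology:
  "quotient_top (coset Y) (seminorm_topology UNIV (+) scale P)
   = seminorm_topology (range (coset Y)) quot_add (quot_smul scale Y) (quotient_seminorms P)"
    (is "?quotient = ?seminorm")
proof -
  have "\<exists>J. finite J \<and> J \<subseteq> P \<and> (\<forall>x. \<rho>' x \<le> (SUP \<rho>\<in>J. \<rho> x))"
    if \<rho>': "\<rho>' \<in> (\<lambda>q. q \<circ> coset Y) ` quotient_seminorms P" for \<rho>'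
  proof -
    obtain q where "q \<in> quotient_seminorms P" "\<rho>' = q \<circ> coset Y"
      using \<rho>' by blast
    then obtain J where "finite J" "J \<subseteq> P" "\<rho>' = quotient_seminorm (\<lambda>x. SUP \<rho>\<in>J. \<rho> x) \<circ> coset Y"
      by (auto elim: quotient_seminormsE)
    then show ?thesis
      using quotient_seminorm_le by auto
  qed
  then have "coarser (seminorm_topology UNIV (+) scale ((\<lambda>q. q \<circ> coset Y) ` quotient_seminorms P))
      (seminorm_topology UNIV (+) scale P)"
    by (intro coarser_seminorm_topology_dominated ballI)
  then have "coarser ?seminorm ?quotient"
    unfolding seminorm_topology_quotient_eq_quotient_top
    by (rule coarser_quotient_top[rotated]) (simp add: topspace_seminorm_topology)
  moreover have "coarser ?quotient ?seminorm"
    by (rule coarser_quotient_top_seminorm_topology)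
  ultimately show ?thesis
    unfolding coarser_def topology_eq by blast
qed

lemma ext_seminorm_quotient_seminorms:
  assumes "\<forall>\<rho>\<in>P. ext_seminorm UNIV (+) scale \<rho>" "q \<in> quotient_seminorms P"
  shows "ext_seminorm (range (coset Y)) quot_add (quot_smul scale Y) q"
proof -
  obtain J where "finite J" "J \<subseteq> P" "q = quotient_seminorm (\<lambda>x. SUP \<rho>\<in>J. \<rho> x)"
    using assms(2) by (rule quotient_seminormsE)
  then show ?thesis
    using assms(1) by (auto intro!: ext_seminorm_quotient_seminorm ext_seminorm_SUP)
qed

lemma quotient_seminorms_finite:
  assumes "\<forall>\<rho>\<in>P. \<forall>x. \<rho> x < \<infinity>" "q \<in> quotient_seminorms P" "A \<in> range (coset Y)"
  shows "q A < \<infinity>"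
proof -
  obtain J where J: "finite J" "J \<subseteq> P" "q = quotient_seminorm (\<lambda>x. SUP \<rho>\<in>J. \<rho> x)"
    using assms(2) by (rule quotient_seminormsE)
  obtain x where "A = coset Y x"
    using assms(3) by blast
  then have "q A \<le> (SUP \<rho>\<in>J. \<rho> x)"
    unfolding J(3) by (rule ssubst) (rule quotient_seminorm_le)
  also have "\<dots> < \<infinity>"
    using J(1,2) assms(1) by (subst finite_SUP_less_iff) (auto simp: bot_ennreal)
  finally show ?thesis .
qed

lemma is_elcs_quotient_top:
  assumes "is_elcs UNIV (+) scale \<tau>"
  shows "is_elcs (range (coset Y)) quot_add (quot_smul scale Y) (quotient_top (coset Y) \<tau>)"
proof -
  obtain P where P: "\<forall>\<rho>\<in>P. ext_seminorm UNIV (+) scale \<rho>" and \<tau>: "\<tau> = seminorm_topology UNIV (+) scale P"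
    using assms unfolding is_elcs_def by blast
  show ?thesis
    unfolding is_elcs_def \<tau> quotient_top_seminorm_topology
    using ext_seminorm_quotient_seminorms[OF P] by (intro exI[of _ "quotient_seminorms P"]) simp
qed

lemma is_lc_quotient_top:
  assumes "is_lc UNIV (+) scale \<tau>"
  shows "is_lc (range (coset Y)) quot_add (quot_smul scale Y) (quotient_top (coset Y) \<tau>)"
proof -
  obtain P where P: "\<forall>\<rho>\<in>P. ext_seminorm UNIV (+) scale \<rho>" "\<forall>\<rho>\<in>P. \<forall>x. \<rho> x < \<infinity>"
    and \<tau>: "\<tau> = seminorm_topology UNIV (+) scale P"
    using assms unfolding is_lc_def by auto
  show ?thesis
    unfolding is_lc_def \<tau> quotient_top_seminorm_topology
    using ext_seminorm_quotient_seminorms[OF P(1)] quotient_seminorms_finite[OF P(2)]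
    by (intro exI[of _ "quotient_seminorms P"]) simp
qed

lemma openin_pullback_saturated:
  assumes Q: "\<forall>q\<in>Q. ext_seminorm (range (coset Y)) quot_add (quot_smul scale Y) q"
    and U: "openin (seminorm_topology UNIV (+) scale ((\<lambda>q. q \<circ> coset Y) ` Q)) U"
  shows "{x \<in> UNIV. coset Y x \<in> coset Y ` U} = U"
proof (intro equalityI subsetI)
  fix x' assume "x' \<in> {x \<in> UNIV. coset Y x \<in> coset Y ` U}"
  then obtain x where "x \<in> U" "coset Y x' = coset Y x"
    by auto
  have "\<forall>\<rho>\<in>(\<lambda>q. q \<circ> coset Y) ` Q. \<rho> (vsub (+) scale x' x) = 0"
  proof
    fix \<rho> assume "\<rho> \<in> (\<lambda>q. q \<circ> coset Y) ` Q"
    then obtain q where "q \<in> Q" "\<rho> = q \<circ> coset Y"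
      by blast
    then show "\<rho> (vsub (+) scale x' x) = 0"
      using comp_coset_vanishes[of q x' x] Q \<open>coset Y x' = coset Y x\<close> by simp
  qed
  then show "x' \<in> U"
    by (rule openin_seminorm_topology_indistinguishable[OF U \<open>x \<in> U\<close> UNIV_I])
qed auto

lemma is_lc_coarser_quotient_topE:
  assumes lc: "is_lc (range (coset Y)) quot_add (quot_smul scale Y) \<sigma>"
    and coarser: "coarser \<sigma> (quotient_top (coset Y) \<tau>)" and topspace: "topspace \<tau> = UNIV"
  obtains \<sigma>' where "is_lc UNIV (+) scale \<sigma>'" "coarser \<sigma>' \<tau>" "\<sigma> = quotient_top (coset Y) \<sigma>'"
proof -
  obtain Q where Q: "\<forall>q\<in>Q. ext_seminorm (range (coset Y)) quot_add (quot_smul scale Y) q"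
      "\<forall>q\<in>Q. \<forall>A\<in>range (coset Y). q A < \<infinity>"
    and \<sigma>: "\<sigma> = seminorm_topology (range (coset Y)) quot_add (quot_smul scale Y) Q"
    using lc unfolding is_lc_def by auto
  define \<sigma>' where "\<sigma>' = seminorm_topology UNIV (+) scale ((\<lambda>q. q \<circ> coset Y) ` Q)"
  have \<sigma>_quotient: "\<sigma> = quotient_top (coset Y) \<sigma>'"
    unfolding \<sigma> \<sigma>'_def by (rule seminorm_topology_quotient_eq_quotient_top)
  have "\<forall>\<rho>\<in>(\<lambda>q. q \<circ> coset Y) ` Q. ext_seminorm UNIV (+) scale \<rho> \<and> (\<forall>x\<in>UNIV. \<rho> x < \<infinity>)"
    using Q ext_seminorm_comp_coset by simp
  then have "is_lc UNIV (+) scale \<sigma>'"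
    unfolding is_lc_def \<sigma>'_def by blast
  moreover have "coarser \<sigma>' \<tau>"
  proof (rule coarser_if_coarser_quotient_top)
    show "topspace \<sigma>' = topspace \<tau>"
      using topspace by (simp add: \<sigma>'_def topspace_seminorm_topology)
    show "{x \<in> topspace \<sigma>'. coset Y x \<in> coset Y ` U} = U" if "openin \<sigma>' U" for U
      using openin_pullback_saturated[OF Q(1)] that by (simp add: \<sigma>'_def topspace_seminorm_topology)
    show "coarser (quotient_top (coset Y) \<sigma>') (quotient_top (coset Y) \<tau>)"
      using coarser by (simp add: \<sigma>_quotient)
  qed
  ultimately show ?thesis
    using \<sigma>_quotient that by blast
qed

lemma is_finest_lc_quotient_top:
  assumes elcs: "is_elcs UNIV (+) scale \<tau>" and finest: "is_finest_lc UNIV (+) scale \<tau> \<tau>F"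
  shows "is_finest_lc (range (coset Y)) quot_add (quot_smul scale Y)
    (quotient_top (coset Y) \<tau>) (quotient_top (coset Y) \<tau>F)"
proof -
  have lcF: "is_lc UNIV (+) scale \<tau>F" and coarserF: "coarser \<tau>F \<tau>"
    and finestF: "\<And>\<sigma>. is_lc UNIV (+) scale \<sigma> \<Longrightarrow> coarser \<sigma> \<tau> \<Longrightarrow> coarser \<sigma> \<tau>F"
    using finest unfolding is_finest_lc_def by auto
  have topspace: "topspace \<tau> = UNIV" "topspace \<tau>F = UNIV"
    using topspace_is_elcs[OF elcs] topspace_is_elcs[OF is_elcs_if_is_lc[OF lcF]] by auto
  have "coarser \<sigma> (quotient_top (coset Y) \<tau>F)"
    if \<sigma>: "is_lc (range (coset Y)) quot_add (quot_smul scale Y) \<sigma>"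
      "coarser \<sigma> (quotient_top (coset Y) \<tau>)" for \<sigma>
  proof -
    obtain \<sigma>' where "is_lc UNIV (+) scale \<sigma>'" "coarser \<sigma>' \<tau>" "\<sigma> = quotient_top (coset Y) \<sigma>'"
      using is_lc_coarser_quotient_topE[OF \<sigma> topspace(1)] .
    moreover have "topspace \<sigma>' = UNIV"
      using topspace_is_elcs[OF is_elcs_if_is_lc[OF \<open>is_lc UNIV (+) scale \<sigma>'\<close>]] .
    ultimately show ?thesis
      using finestF topspace(2) by (simp add: coarser_quotient_top)
  qed
  moreover have "coarser (quotient_top (coset Y) \<tau>F) (quotient_top (coset Y) \<tau>)"
    using topspace coarserF by (intro coarser_quotient_top) simp_all
  ultimately show ?thesis
    unfolding is_finest_lc_def using is_lc_quotient_top[OF lcF] by blast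
qed

end

theorem theorem4p3:
  fixes scale :: "'k::{real_normed_field,banach} \<Rightarrow> 'a::ab_group_add \<Rightarrow> 'a"
    and \<tau> \<tau>F :: "'a topology"
    and Y :: "'a set"
  assumes "vector_space scale"
    and "is_elcs UNIV (+) scale \<tau>"
    and "is_finest_lc UNIV (+) scale \<tau> \<tau>F"
    and "module.subspace scale Y"
    and "closedin \<tau> Y"
  shows "is_elcs (range (coset Y)) quot_add (quot_smul scale Y) (quotient_top (coset Y) \<tau>)
       \<and> is_finest_lc (range (coset Y)) quot_add (quot_smul scale Y)
            (quotient_top (coset Y) \<tau>) (quotient_top (coset Y) \<tau>F)
       \<and> cont_dual (range (coset Y)) quot_add (quot_smul scale Y) (quotient_top (coset Y) \<tau>)
         = cont_dual (range (coset Y)) quot_add (quot_smul scale Y) (quotient_top (coset Y) \<tau>F)"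
proof -
  interpret vector_space_quotient scale Y
    using assms(1,4) by (simp add: vector_space_quotient_def vector_space_quotient_axioms_def)
  have elcs: "is_elcs (range (coset Y)) quot_add (quot_smul scale Y) (quotient_top (coset Y) \<tau>)"
    by (rule is_elcs_quotient_top[OF assms(2)])
  have finest: "is_finest_lc (range (coset Y)) quot_add (quot_smul scale Y)
      (quotient_top (coset Y) \<tau>) (quotient_top (coset Y) \<tau>F)"
    by (rule is_finest_lc_quotient_top[OF assms(2,3)])
  have "cont_dual (range (coset Y)) quot_add (quot_smul scale Y) (quotient_top (coset Y) \<tau>)
      = cont_dual (range (coset Y)) quot_add (quot_smul scale Y) (quotient_top (coset Y) \<tau>F)"
    by (rule cont_dual_eq_if_finest_lc[OF quot_smul_closed elcs finest])
  with elcs finest show ?thesis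
    by blast
qed

end
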